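(* Let $I$ be an ideal of $\mathbb{R}_{max}[x_1,\dots,x_n]$. Then the coordinate-wise symmetrization map $\varphi=s^n:(\mathbb{R}_{max})^n\longrightarrow (s(\mathbb{R}_{max}))^n$ induces a set bijection \[trop(V(I)):= \bigcap_{f\in I} trop(V(f)) \simeq \Big(\bigcap_{f\in I}HV(f)\Big) \bigcap \operatorname{Im}\varphi.\]
   Context: Let $M=\mathbb{R}_{max}=(\mathbb{R}\cup\{-\infty\},\max,+)$ be the tropical semifield (addition is $\max$, multiplication is the usual addition of reals), totally ordered by the usual order. Its symmetrization is $R=s(M)=\{(a,1),(a,-1)\mid a\in M\setminus\{-\infty\}\}\cup\{0\}$, where $0=(-\infty,1)=(-\infty,-1)$; write $(a,1)=a$, $(a,-1)=-a$, $|(a,\pm1)|=a$. The hyperaddition on $R$ is: $x+y=\{x\}$ if $|x|>|y|$ or $x=y$; $x+y=\{y\}$ if $|x|<|y|$; and $x+(-x)=\{(t,\pm1)\mid t\le |x|\}$. Multiplication is component-wise, $(a,p)(b,q)=(a+b,pq)$. With these operations $R$ is a hyperfield. Let $s:M\to R$, $a\mapsto (a,1)$, and $\varphi=s^n:M^n\to R^n$ coordinate-wise; $\varphi$ is injective. For a polynomial $g=\sum_I a_I X^I$ over the hyperfield $R$ (no repeated monomials) and $\alpha\in R^n$, the evaluation $g(\alpha)=\sum_I a_I\alpha^I$ is a subset of $R$. For $f\in M[x_1,\dots,x_n]$, fix a presentation $f=\sum_i m_i$ as a sum of distinct monomials, and set $\tilde f_{\hat i}:=\sum_{j\neq i}(m_j,1)+(m_i,-1)\in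 R[x_1,\dots,x_n]$ (identifying coefficients $a\in M$ with $(a,1)\in R$), $V(\tilde f_{\hat i}):=\{z\in R^n\mid 0\in \tilde f_{\hat i}(z)\}$, and $HV(f):=\bigcup_i V(\tilde f_{\hat i})$. The tropical hypersurface $trop(V(f))$ is the set of $a\in M^n$ (coordinates equal to $-\infty$ allowed) at which the maximum among the values of the monomials of $f$ is attained at least twice. It was shown earlier that $\varphi$ restricts to a bijection $trop(V(f))\simeq HV(f)\cap\operatorname{Im}\varphi$ for each single $f$. *)

theory Defs
  imports "HOL-Library.Extended_Real"
begin

text \<open>Elements of M = R_max are modelled as extended reals different from +\<infinity>;
  -\<infinity> is the tropical zero. Variables are indexed by a finite type 'n (n = CARD('n)).  A tropical polynomial is its coefficient
  function, with -\<infinity> meaning "monomial absent"; it must have finite support and no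
  coefficient +\<infinity>.\<close>

type_synonym 'n mono = "'n \<Rightarrow> nat"
type_synonym 'n tpoly = "'n mono \<Rightarrow> ereal"

definition tpoints :: "('n \<Rightarrow> ereal) set" where
  "tpoints = {a. \<forall>i. a i \<noteq> \<infinity>}"

definition tsupp :: "'n tpoly \<Rightarrow> 'n mono set" where
  "tsupp p = {I. p I \<noteq> -\<infinity>}"

definition tpolys :: "'n tpoly set" where
  "tpolys = {p. finite (tsupp p) \<and> (\<forall>I. p I \<noteq> \<infinity>)}"

definition tpoly_zero :: "'n tpoly" where
  "tpoly_zero = (\<lambda>I. -\<infinity>)"

definition tpoly_add :: "'n tpoly \<Rightarrow> 'n tpoly \<Rightarrow> 'n tpoly" where
  "tpoly_add p q = (\<lambda>I. max (p I) (q I))"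

definition tpoly_mul :: "'n tpoly \<Rightarrow> 'n tpoly \<Rightarrow> 'n tpoly" where
  "tpoly_mul p q = (\<lambda>I. Sup {p J + q K | J K. (\<forall>v. J v + K v = I v)})"

definition tideal :: "'n tpoly set \<Rightarrow> bool" where
  "tideal S \<longleftrightarrow> S \<subseteq> tpolys \<and> tpoly_zero \<in> S
     \<and> (\<forall>f\<in>S. \<forall>g\<in>S. tpoly_add f g \<in> S)
     \<and> (\<forall>f\<in>S. \<forall>g\<in>tpolys. tpoly_mul g f \<in> S)"

text \<open>Tropical value of the monomial with exponent I of p at a (convention x^0 = 0).\<close>
definition mono_val :: "'n::finite tpoly \<Rightarrow> 'n mono \<Rightarrow> ('n \<Rightarrow> ereal) \<Rightarrow> ereal" where
  "mono_val p I a = p I + (\<Sum>i\<in>UNIV. if I i = 0 then 0 else ereal (real (I i)) * a i)"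

definition trop_hyp :: "'n::finite tpoly \<Rightarrow> ('n \<Rightarrow> ereal) set" where
  "trop_hyp p = {a \<in> tpoints.
     (\<exists>I\<in>tsupp p. \<exists>J\<in>tsupp p. I \<noteq> J \<and> mono_val p I a = mono_val p J a
         \<and> (\<forall>K\<in>tsupp p. mono_val p K a \<le> mono_val p I a))
     \<or> (\<forall>K\<in>tsupp p. mono_val p K a = -\<infinity>)}"

definition tropV :: "'n::finite tpoly set \<Rightarrow> ('n \<Rightarrow> ereal) set" where
  "tropV S = tpoints \<inter> (\<Inter>f\<in>S - {tpoly_zero}. trop_hyp f)"

datatype sym = SZero | SPos real | SNeg real
  \<comment> \<open>SPos a = (a,1), SNeg a = (a,-1), SZero = (-\<infinity>,\<plusminus>1)\<close>

fun sabs :: "sym \<Rightarrow> ereal" where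
  "sabs SZero = -\<infinity>"
| "sabs (SPos a) = ereal a"
| "sabs (SNeg a) = ereal a"

definition hadd :: "sym \<Rightarrow> sym \<Rightarrow> sym set" where
  "hadd x y = (if sabs x > sabs y \<or> x = y then {x}
               else if sabs x < sabs y then {y}
               else {t. sabs t \<le> sabs x})"

fun smul :: "sym \<Rightarrow> sym \<Rightarrow> sym" where
  "smul SZero y = SZero"
| "smul x SZero = SZero"
| "smul (SPos a) (SPos b) = SPos (a + b)"
| "smul (SPos a) (SNeg b) = SNeg (a + b)"
| "smul (SNeg a) (SPos b) = SNeg (a + b)"
| "smul (SNeg a) (SNeg b) = SPos (a + b)"

definition sone :: sym where "sone = SPos 0"

fun spow :: "sym \<Rightarrow> nat \<Rightarrow> sym" where
  "spow x 0 = sone"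
| "spow x (Suc k) = smul x (spow x k)"

definition setplus :: "sym set \<Rightarrow> sym set \<Rightarrow> sym set" where
  "setplus A B = (\<Union>a\<in>A. \<Union>b\<in>B. hadd a b)"

definition smon :: "('n::finite \<Rightarrow> sym) \<Rightarrow> 'n mono \<Rightarrow> sym" where
  "smon \<alpha> I = Finite_Set.fold (\<lambda>i acc. smul (spow (\<alpha> i) (I i)) acc) sone UNIV"

type_synonym 'n spoly = "'n mono \<Rightarrow> sym"

definition ssupp :: "'n spoly \<Rightarrow> 'n mono set" where
  "ssupp g = {I. g I \<noteq> SZero}"

definition seval :: "'n::finite spoly \<Rightarrow> ('n \<Rightarrow> sym) \<Rightarrow> sym set" where
  "seval g \<alpha> = Finite_Set.fold (\<lambda>I A. setplus {smul (g I) (smon \<alpha> I)} A) {SZero} (ssupp g)"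

definition sV :: "'n::finite spoly \<Rightarrow> ('n \<Rightarrow> sym) set" where
  "sV g = {z. SZero \<in> seval g z}"

fun semb :: "ereal \<Rightarrow> sym" where
  "semb (ereal r) = SPos r"
| "semb _ = SZero"

definition phi :: "('n \<Rightarrow> ereal) \<Rightarrow> ('n \<Rightarrow> sym)" where
  "phi a = (\<lambda>i. semb (a i))"

definition ftilde :: "'n tpoly \<Rightarrow> 'n mono \<Rightarrow> 'n spoly" where
  "ftilde f i = (\<lambda>J. if f J = -\<infinity> then SZero
                     else if J = i then SNeg (real_of_ereal (f J))
                     else SPos (real_of_ereal (f J)))"

definition HV :: "'n::finite tpoly \<Rightarrow> ('n \<Rightarrow> sym) set" where
  "HV f = (\<Union>i\<in>tsupp f. sV (ftilde f i))"

end

theory Submission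
  imports Defs
begin

text \<open>At a point \<open>a\<close> of \<open>M\<^sup>n\<close>, the terms of \<open>ftilde f i\<close> evaluated at \<open>phi a\<close> are the
  values of the monomials of \<open>f\<close> at \<open>a\<close>, embedded with sign \<open>+1\<close> except for the \<open>i\<close>-th one,
  which gets sign \<open>-1\<close>. A hypersum of finitely many elements of \<open>s(M)\<close> has a closed form: a
  unique term of largest absolute value absorbs all the others, and otherwise the sum consists
  of everything of absolute value at most that maximum. Hence \<open>0\<close> lies in the evaluation of
  \<open>ftilde f i\<close> at \<open>phi a\<close> iff all monomials vanish at \<open>a\<close> or the maximum is attained by the
  \<open>i\<close>-th and by another monomial. Taking the union over \<open>i\<close> gives \<open>phi a \<in> HV f\<close> iff
  \<open>a \<in> trop(V(f))\<close>; intersecting over the nonzero elements of the ideal and using injectivity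
  of \<open>phi\<close> gives the bijection.\<close>

section \<open>Hyperaddition in \<open>s(M)\<close>\<close>

fun sneg :: "sym \<Rightarrow> sym" where
  "sneg SZero = SZero" | "sneg (SPos a) = SNeg a" | "sneg (SNeg a) = SPos a"

lemma sabs_eq_MInf_iff [simp]: "sabs x = -\<infinity> \<longleftrightarrow> x = SZero"
  by (cases x) auto

lemma sabs_sneg [simp]: "sabs (sneg x) = sabs x"
  by (cases x) auto

lemma sneg_neq_self: "x \<noteq> SZero \<Longrightarrow> sneg x \<noteq> x"
  by (cases x) auto

lemma hadd_left_dominant: "sabs y < sabs x \<Longrightarrow> hadd x y = {x}"
  unfolding hadd_def by auto

lemma hadd_right_dominant: "sabs x < sabs y \<Longrightarrow> hadd x y = {y}"
  unfolding hadd_def by auto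

lemma hadd_cancel: "sabs x = sabs y \<Longrightarrow> x \<noteq> y \<Longrightarrow> hadd x y = {t. sabs t \<le> sabs x}"
  unfolding hadd_def by auto

lemma hadd_self: "hadd x x = {x}"
  unfolding hadd_def by auto

lemma hadd_subset: "hadd x y \<subseteq> {t. sabs t \<le> max (sabs x) (sabs y)}"
  unfolding hadd_def by auto

lemma setplus_singleton: "setplus {x} A = (\<Union>b\<in>A. hadd x b)"
  unfolding setplus_def by auto

lemma setplus_abs_le_set:
  assumes "sabs x \<le> r"
  shows "setplus {x} {t. sabs t \<le> r} = {t. sabs t \<le> r}"
proof (intro equalityI subsetI)
  fix t assume "t \<in> setplus {x} {t. sabs t \<le> r}"
  then obtain b where "sabs b \<le> r" "t \<in> hadd x b" unfolding setplus_singleton by blast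
  then show "t \<in> {t. sabs t \<le> r}"
    using assms hadd_subset[of x b] by (auto intro: order_trans[OF _ max.boundedI])
next
  fix t assume t: "t \<in> {t. sabs t \<le> r}"
  consider "sabs x < sabs t" | "t = x" | "t \<noteq> x" "sabs t \<le> sabs x" by fastforce
  then have "\<exists>b. sabs b \<le> r \<and> t \<in> hadd x b"
  proof cases
    case 1
    then show ?thesis using t by (auto simp: hadd_right_dominant)
  next
    case 2
    then show ?thesis using assms by (auto simp: hadd_self)
  next
    case 3
    then have "x \<noteq> SZero" by auto
    then have "hadd x (sneg x) = {t. sabs t \<le> sabs x}"
      by (intro hadd_cancel) (auto dest: sneg_neq_self)
    then show ?thesis using 3 assms by (intro exI[of _ "sneg x"]) auto
  qed
  then show "t \<in> setplus {x} {t. sabs t \<le> r}" unfolding setplus_singleton by blast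
qed

section \<open>Hypersums of finite sets\<close>

definition max_abs :: "sym set \<Rightarrow> ereal" where
  "max_abs V = Sup (sabs ` V)"

definition abs_maximisers :: "sym set \<Rightarrow> sym set" where
  "abs_maximisers V = {v \<in> V. sabs v = max_abs V}"

text \<open>Closed form of the hypersum of the elements of a finite set \<open>V\<close>, taken in any order
  (see \<open>fold_setplus_eq_hsum\<close>).\<close>
definition hsum :: "sym set \<Rightarrow> sym set" where
  "hsum V = (if \<exists>v. abs_maximisers V = {v} then abs_maximisers V else {t. sabs t \<le> max_abs V})"

lemma max_abs_empty [simp]: "max_abs {} = -\<infinity>"
  by (simp add: max_abs_def bot_ereal_def)

lemma max_abs_insert: "max_abs (insert x V) = max (sabs x) (max_abs V)"
  by (simp add: max_abs_def sup_max)

lemma abs_le_max_abs: "v \<in> V \<Longrightarrow> sabs v \<le> max_abs V"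
  by (simp add: max_abs_def Sup_upper)

lemma max_abs_eqI: "v \<in> V \<Longrightarrow> (\<And>u. u \<in> V \<Longrightarrow> sabs u \<le> sabs v) \<Longrightarrow> max_abs V = sabs v"
  unfolding max_abs_def by (rule Sup_eqI) (auto intro: Sup_upper)

lemma max_abs_eq_MInf_iff: "max_abs V = -\<infinity> \<longleftrightarrow> V \<subseteq> {SZero}"
  unfolding max_abs_def Sup_eq_MInfty subset_singleton_iff[symmetric] by auto

lemma abs_maximisers_nonempty:
  assumes "finite V" "V \<noteq> {}"
  shows "abs_maximisers V \<noteq> {}"
proof -
  have "Max (sabs ` V) \<in> sabs ` V" using assms by simp
  then obtain v where v: "v \<in> V" "sabs v = Max (sabs ` V)" by auto
  then have "max_abs V = sabs v"
    using assms(1) by (intro max_abs_eqI) simp_all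
  then show ?thesis using v(1) unfolding abs_maximisers_def by auto
qed

lemma hsum_subset: "hsum V \<subseteq> {t. sabs t \<le> max_abs V}"
  unfolding hsum_def abs_maximisers_def by auto

lemma hsum_nonempty: "hsum V \<noteq> {}"
  unfolding hsum_def by (auto intro: exI[of _ SZero])

lemma hsum_empty [simp]: "hsum {} = {SZero}"
  unfolding hsum_def abs_maximisers_def by auto

lemma hsum_singleton [simp]: "hsum {x} = {x}"
  unfolding hsum_def abs_maximisers_def max_abs_def by auto

lemma setplus_hsum_dominant:
  assumes "max_abs V < sabs x"
  shows "setplus {x} (hsum V) = hsum (insert x V)"
proof -
  have "abs_maximisers (insert x V) = {x}"
    using assms abs_le_max_abs[of _ V] unfolding abs_maximisers_def max_abs_insert by fastforce
  then have "hsum (insert x V) = {x}" unfolding hsum_def by auto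
  moreover have "hadd x b = {x}" if "b \<in> hsum V" for b
    using hsum_subset[of V] that assms by (intro hadd_left_dominant) force
  ultimately show ?thesis using hsum_nonempty[of V] unfolding setplus_singleton by auto
qed

lemma setplus_hsum_dominated:
  assumes "sabs x < max_abs V"
  shows "setplus {x} (hsum V) = hsum (insert x V)"
proof -
  have max: "max_abs (insert x V) = max_abs V" using assms by (simp add: max_abs_insert)
  then have "abs_maximisers (insert x V) = abs_maximisers V"
    using assms unfolding abs_maximisers_def by auto
  then have same: "hsum (insert x V) = hsum V" unfolding hsum_def max by simp
  show ?thesis
  proof (cases "\<exists>v. abs_maximisers V = {v}")
    case True
    then obtain v where v: "abs_maximisers V = {v}" by blast
    then have "sabs v = max_abs V" unfolding abs_maximisers_def by auto
    then have "hadd x v = {v}" using assms by (intro hadd_right_dominant) simp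
    then show ?thesis using v same unfolding hsum_def setplus_singleton by simp
  next
    case False
    then show ?thesis using same setplus_abs_le_set[of x "max_abs V"] assms unfolding hsum_def by simp
  qed
qed

lemma setplus_hsum_tie:
  assumes "finite V" and x: "sabs x = max_abs V"
  shows "setplus {x} (hsum V) = hsum (insert x V)"
proof -
  have max: "max_abs (insert x V) = max_abs V" using x by (simp add: max_abs_insert)
  have maxs: "abs_maximisers (insert x V) = insert x (abs_maximisers V)"
    unfolding abs_maximisers_def max using x by auto
  show ?thesis
  proof (cases "abs_maximisers V \<subseteq> {x}")
    case True
    then have ins: "hsum (insert x V) = {x}" using maxs unfolding hsum_def by auto
    show ?thesis
    proof (cases "V = {}")
      case True
      then show ?thesis using ins x by (simp add: setplus_singleton hadd_self)
    next
      case False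
      then have "abs_maximisers V = {x}" using True abs_maximisers_nonempty[OF \<open>finite V\<close>] by auto
      then show ?thesis using ins unfolding hsum_def setplus_singleton by (simp add: hadd_self)
    qed
  next
    case False
    then obtain w where w: "w \<in> abs_maximisers V" "w \<noteq> x" by auto
    then have ins: "hsum (insert x V) = {t. sabs t \<le> max_abs V}"
      using maxs max unfolding hsum_def by auto
    show ?thesis
    proof (cases "\<exists>v. abs_maximisers V = {v}")
      case True
      then have "abs_maximisers V = {w}" using w by auto
      moreover have "hadd x w = {t. sabs t \<le> max_abs V}"
        using w x by (subst hadd_cancel) (auto simp: abs_maximisers_def)
      ultimately show ?thesis using ins unfolding hsum_def setplus_singleton by auto
    next
      case False
      then show ?thesis using ins setplus_abs_le_set[of x] x unfolding hsum_def by simp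
    qed
  qed
qed

lemma setplus_hsum_insert: "finite V \<Longrightarrow> setplus {x} (hsum V) = hsum (insert x V)"
  by (cases "sabs x" "max_abs V" rule: linorder_cases)
    (simp_all add: setplus_hsum_dominated setplus_hsum_tie setplus_hsum_dominant)

lemma hadd_eq_hsum: "hadd x y = hsum {x, y}"
  using setplus_hsum_insert[of "{y}" x] by (simp add: setplus_singleton)

lemma setplus_left_commute: "setplus {x} (setplus {y} A) = setplus {y} (setplus {x} A)"
proof -
  have "setplus {x} (hadd y a) = setplus {y} (hadd x a)" for a
  proof -
    have "setplus {x} (hadd y a) = hsum {x, y, a}"
      unfolding hadd_eq_hsum by (rule setplus_hsum_insert) simp
    also have "\<dots> = hsum {y, x, a}" by (metis insert_commute)
    also have "\<dots> = setplus {y} (hadd x a)"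
      unfolding hadd_eq_hsum by (rule setplus_hsum_insert[symmetric]) simp
    finally show ?thesis .
  qed
  moreover have "setplus {u} (setplus {v} A) = (\<Union>a\<in>A. setplus {u} (hadd v a))" for u v
    unfolding setplus_def by blast
  ultimately show ?thesis by simp
qed

lemma comp_fun_commute_setplus: "comp_fun_commute (\<lambda>I A. setplus {t I} A)"
  by unfold_locales (auto simp: fun_eq_iff setplus_left_commute)

lemma fold_setplus_eq_hsum:
  "finite K \<Longrightarrow> Finite_Set.fold (\<lambda>I A. setplus {t I} A) {SZero} K = hsum (t ` K)"
proof (induction K rule: finite_induct)
  case (insert J K)
  interpret comp_fun_commute "\<lambda>I A. setplus {t I} A" by (rule comp_fun_commute_setplus)
  show ?case using insert by (simp add: setplus_hsum_insert)
qed simp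

lemma seval_eq_hsum:
  "finite (ssupp g) \<Longrightarrow> seval g \<alpha> = hsum ((\<lambda>I. smul (g I) (smon \<alpha> I)) ` ssupp g)"
  unfolding seval_def by (rule fold_setplus_eq_hsum)

lemma SZero_in_hsum_iff:
  assumes "finite V"
  shows "SZero \<in> hsum V \<longleftrightarrow>
    V \<subseteq> {SZero} \<or> (\<exists>v\<in>V. \<exists>w\<in>V. v \<noteq> w \<and> sabs v = sabs w \<and> (\<forall>u\<in>V. sabs u \<le> sabs v))"
    (is "_ \<longleftrightarrow> _ \<or> ?tie")
proof (cases "\<exists>v. abs_maximisers V = {v}")
  case True
  then obtain v where v: "abs_maximisers V = {v}" by blast
  have "\<not> ?tie"
  proof
    assume ?tie
    then obtain a b where ab: "a \<in> V" "b \<in> V" "a \<noteq> b" "sabs a = sabs b" "\<forall>u\<in>V. sabs u \<le> sabs a"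
      by blast
    then have "a \<in> abs_maximisers V" "b \<in> abs_maximisers V"
      using max_abs_eqI[of a V] unfolding abs_maximisers_def by auto
    then show False using v \<open>a \<noteq> b\<close> by auto
  qed
  moreover have "hsum V = {v}" "sabs v = max_abs V"
    using v unfolding hsum_def abs_maximisers_def by auto
  ultimately show ?thesis by (metis max_abs_eq_MInf_iff sabs_eq_MInf_iff singleton_iff)
next
  case False
  have "V = {} \<or> ?tie"
  proof (cases "V = {}")
    case nonempty: False
    then obtain a where a: "a \<in> abs_maximisers V"
      using abs_maximisers_nonempty[OF assms] by blast
    moreover have "abs_maximisers V \<noteq> {a}" using False by blast
    ultimately obtain b where b: "b \<in> abs_maximisers V" "b \<noteq> a" by blast
    have a': "a \<in> V" "sabs a = max_abs V" and b': "b \<in> V" "sabs b = max_abs V"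
      using a b(1) unfolding abs_maximisers_def by blast+
    have "\<forall>u\<in>V. sabs u \<le> sabs a"
      unfolding a'(2) using abs_le_max_abs by blast
    with a' b' b(2) show ?thesis by (metis (full_types))
  qed simp
  then have "V \<subseteq> {SZero} \<or> ?tie" by blast
  moreover have "hsum V = {t. sabs t \<le> max_abs V}" unfolding hsum_def using False by (rule if_not_P)
  then have "SZero \<in> hsum V" by simp
  ultimately show ?thesis by blast
qed

section \<open>Evaluation at points of \<open>M\<^sup>n\<close>\<close>

lemma smul_sneg_left: "smul (sneg x) y = sneg (smul x y)"
  by (cases x; cases y) auto

lemma smul_left_commute: "smul x (smul y z) = smul y (smul x z)"
  by (cases x; cases y; cases z) (auto simp: algebra_simps)

lemma comp_fun_commute_smul: "comp_fun_commute (\<lambda>i acc. smul (h i) acc)"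
  by unfold_locales (simp add: fun_eq_iff smul_left_commute)

lemma semb_PInf [simp]: "semb \<infinity> = SZero"
  by (metis PInfty_eq_infinity semb.simps(2))

lemma semb_MInf [simp]: "semb (-\<infinity>) = SZero"
  by (metis MInfty_eq_minfinity semb.simps(3))

lemma sabs_semb: "x \<noteq> \<infinity> \<Longrightarrow> sabs (semb x) = x"
  by (cases x) simp_all

lemma smul_semb: "x \<noteq> \<infinity> \<Longrightarrow> y \<noteq> \<infinity> \<Longrightarrow> smul (semb x) (semb y) = semb (x + y)"
  by (cases x; cases y) simp_all

lemma sneg_semb_neq_semb: "x \<noteq> \<infinity> \<Longrightarrow> x \<noteq> -\<infinity> \<Longrightarrow> sneg (semb x) \<noteq> semb y"
  by (cases x; cases y) simp_all

lemma semb_eq_semb_iff: "x \<noteq> \<infinity> \<Longrightarrow> y \<noteq> \<infinity> \<Longrightarrow> semb x = semb y \<longleftrightarrow> x = y"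
  by (cases x; cases y) simp_all

lemma exponent_term_neq_PInf: "e \<noteq> \<infinity> \<Longrightarrow> (if k = 0 then 0 else ereal (real k) * e) \<noteq> \<infinity>"
  by (cases e) auto

lemma spow_semb:
  "e \<noteq> \<infinity> \<Longrightarrow> spow (semb e) k = semb (if k = 0 then 0 else ereal (real k) * e)"
proof (induction k)
  case 0
  then show ?case by (simp add: sone_def zero_ereal_def)
next
  case (Suc k)
  have "e + (if k = 0 then 0 else ereal (real k) * e) = ereal (real (Suc k)) * e"
    using Suc.prems by (cases e) (auto simp: algebra_simps)
  then show ?case using Suc exponent_term_neq_PInf[of e k] by (simp add: smul_semb)
qed

lemma exponent_sum_neq_PInf:
  "\<forall>i. a i \<noteq> \<infinity> \<Longrightarrow> (\<Sum>i\<in>F. if J i = 0 then 0 else ereal (real (J i)) * a i) \<noteq> \<infinity>"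
  by (simp add: sum_Pinfty exponent_term_neq_PInf)

lemma fold_spow_semb:
  assumes "finite F" and a: "\<forall>i. a i \<noteq> \<infinity>"
  shows "Finite_Set.fold (\<lambda>i acc. smul (spow (semb (a i)) (J i)) acc) sone F
       = semb (\<Sum>i\<in>F. if J i = 0 then 0 else ereal (real (J i)) * a i)"
  using assms(1)
proof (induction F rule: finite_induct)
  case empty
  then show ?case by (simp add: sone_def zero_ereal_def)
next
  case (insert i F)
  interpret comp_fun_commute "\<lambda>i acc. smul (spow (semb (a i)) (J i)) acc"
    by (rule comp_fun_commute_smul)
  have "Finite_Set.fold (\<lambda>i acc. smul (spow (semb (a i)) (J i)) acc) sone (insert i F)
      = smul (spow (semb (a i)) (J i)) (Finite_Set.fold (\<lambda>i acc. smul (spow (semb (a i)) (J i)) acc) sone F)"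
    using insert.hyps by (rule fold_insert)
  then show ?case
    using insert a exponent_term_neq_PInf[of "a i" "J i"]
    by (simp add: spow_semb smul_semb exponent_sum_neq_PInf)
qed

lemma smon_phi:
  "a \<in> tpoints \<Longrightarrow> smon (phi a) J = semb (\<Sum>i\<in>UNIV. if J i = 0 then 0 else ereal (real (J i)) * a i)"
  unfolding smon_def phi_def tpoints_def by (simp add: fold_spow_semb)

lemma mono_val_neq_PInf: "f \<in> tpolys \<Longrightarrow> a \<in> tpoints \<Longrightarrow> mono_val f J a \<noteq> \<infinity>"
  using exponent_sum_neq_PInf[where F=UNIV and J=J]
  unfolding mono_val_def tpolys_def tpoints_def by simp

lemma ftilde_eq:
  assumes "f \<in> tpolys" "J \<in> tsupp f"
  shows "ftilde f i J = (if J = i then sneg (semb (f J)) else semb (f J))"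
  using assms unfolding ftilde_def tpolys_def tsupp_def by (cases "f J") auto

lemma ftilde_term_phi:
  assumes a: "a \<in> tpoints" and f: "f \<in> tpolys" and J: "J \<in> tsupp f"
  shows "smul (ftilde f i J) (smon (phi a) J)
       = (if J = i then sneg (semb (mono_val f J a)) else semb (mono_val f J a))"
proof -
  define e where "e = (\<Sum>i\<in>UNIV. if J i = 0 then 0 else ereal (real (J i)) * a i)"
  have "e \<noteq> \<infinity>" using a exponent_sum_neq_PInf unfolding e_def tpoints_def by blast
  moreover have "f J \<noteq> \<infinity>" using f unfolding tpolys_def by simp
  moreover have "smon (phi a) J = semb e" unfolding e_def using a by (rule smon_phi)
  moreover have "mono_val f J a = f J + e" unfolding mono_val_def e_def ..
  ultimately have "smul (semb (f J)) (smon (phi a) J) = semb (mono_val f J a)"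
    by (simp add: smul_semb)
  then show ?thesis unfolding ftilde_eq[OF f J] by (auto simp: smul_sneg_left)
qed

lemma seval_ftilde_phi:
  assumes "a \<in> tpoints" "f \<in> tpolys"
  shows "seval (ftilde f i) (phi a) = hsum ((\<lambda>J. if J = i then sneg (semb (mono_val f J a))
                                                else semb (mono_val f J a)) ` tsupp f)"
proof -
  have "ssupp (ftilde f i) = tsupp f"
    unfolding ssupp_def tsupp_def ftilde_def by auto
  moreover have "finite (tsupp f)" using assms(2) unfolding tpolys_def by simp
  ultimately show ?thesis
    using ftilde_term_phi[OF assms] by (simp add: seval_eq_hsum cong: image_cong)
qed

section \<open>Tropical hypersurfaces as hyperfield varieties\<close>

lemma SZero_in_hsum_one_negated:
  assumes "finite S" "i \<in> S" and m: "\<forall>J\<in>S. m J \<noteq> \<infinity>"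
  shows "SZero \<in> hsum ((\<lambda>J. if J = i then sneg (semb (m J)) else semb (m J)) ` S) \<longleftrightarrow>
    (\<forall>J\<in>S. m J = -\<infinity>) \<or> (\<exists>J\<in>S. J \<noteq> i \<and> m J = m i \<and> (\<forall>K\<in>S. m K \<le> m i))"
    (is "_ \<longleftrightarrow> ?vanish \<or> ?tie_at_i")
proof -
  define t where "t J = (if J = i then sneg (semb (m J)) else semb (m J))" for J
  have abs_t: "sabs (t J) = m J" if "J \<in> S" for J
    using m[rule_format, OF that] by (auto simp: t_def sabs_semb)
  have "SZero \<in> hsum (t ` S) \<longleftrightarrow>
      ?vanish \<or> (\<exists>I\<in>S. \<exists>J\<in>S. t I \<noteq> t J \<and> m I = m J \<and> (\<forall>K\<in>S. m K \<le> m I))"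
    (is "_ \<longleftrightarrow> _ \<or> ?tie")
    unfolding SZero_in_hsum_iff[OF finite_imageI[OF assms(1)]] using abs_t
    by (auto simp flip: sabs_eq_MInf_iff)
  moreover have "?vanish \<or> ?tie_at_i" if ?tie
  proof -
    from that obtain I J where IJ: "I \<in> S" "J \<in> S" "t I \<noteq> t J" "m I = m J"
      and max: "\<forall>K\<in>S. m K \<le> m I" by blast
    show ?thesis
    proof (cases "m I = -\<infinity>")
      case True
      then show ?thesis using max by auto
    next
      case False
      have "t I = t J" if "(I = i) = (J = i)"
        using that IJ(4) by (cases "I = i") (auto simp: t_def)
      then have "I = i \<and> J \<noteq> i \<or> J = i \<and> I \<noteq> i" using IJ(3) by blast
      then show ?thesis using IJ max by auto
    qed
  qed
  moreover have "?vanish \<or> ?tie" if ?tie_at_i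
  proof -
    from that obtain J where J: "J \<in> S" "J \<noteq> i" "m J = m i" and max: "\<forall>K\<in>S. m K \<le> m i"
      by blast
    show ?thesis
    proof (cases "m i = -\<infinity>")
      case True
      then show ?thesis using max by auto
    next
      case False
      then have "t i \<noteq> t J" using J m assms(2) by (simp add: t_def sneg_semb_neq_semb)
      then have ?tie using J max assms(2) by (metis (no_types, lifting))
      then show ?thesis ..
    qed
  qed
  ultimately show ?thesis unfolding t_def by blast
qed

lemma phi_in_sV_ftilde_iff:
  assumes a: "a \<in> tpoints" and f: "f \<in> tpolys" and i: "i \<in> tsupp f"
  shows "phi a \<in> sV (ftilde f i) \<longleftrightarrow>
    (\<forall>J\<in>tsupp f. mono_val f J a = -\<infinity>) \<or>
    (\<exists>J\<in>tsupp f. J \<noteq> i \<and> mono_val f J a = mono_val f i a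
       \<and> (\<forall>K\<in>tsupp f. mono_val f K a \<le> mono_val f i a))"
    (is "_ \<longleftrightarrow> ?rhs")
proof -
  have "phi a \<in> sV (ftilde f i) \<longleftrightarrow>
      SZero \<in> hsum ((\<lambda>J. if J = i then sneg (semb (mono_val f J a))
                                   else semb (mono_val f J a)) ` tsupp f)"
    by (simp only: sV_def mem_Collect_eq seval_ftilde_phi[OF a f])
  also have "\<dots> \<longleftrightarrow> ?rhs"
    using f i mono_val_neq_PInf[OF f a] unfolding tpolys_def
    by (intro SZero_in_hsum_one_negated) auto
  finally show ?thesis .
qed

lemma trop_hyp_iff_phi_in_HV:
  assumes a: "a \<in> tpoints" and f: "f \<in> tpolys" and "tsupp f \<noteq> {}"
  shows "a \<in> trop_hyp f \<longleftrightarrow> phi a \<in> HV f"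
proof -
  define m where "m J = mono_val f J a" for J
  have "a \<in> trop_hyp f \<longleftrightarrow>
      (\<exists>I\<in>tsupp f. \<exists>J\<in>tsupp f. I \<noteq> J \<and> m I = m J \<and> (\<forall>K\<in>tsupp f. m K \<le> m I))
      \<or> (\<forall>K\<in>tsupp f. m K = -\<infinity>)"
    using a unfolding trop_hyp_def m_def by simp
  moreover have "phi a \<in> HV f \<longleftrightarrow> (\<exists>i\<in>tsupp f. (\<forall>J\<in>tsupp f. m J = -\<infinity>) \<or>
      (\<exists>J\<in>tsupp f. J \<noteq> i \<and> m J = m i \<and> (\<forall>K\<in>tsupp f. m K \<le> m i)))"
    unfolding HV_def m_def using phi_in_sV_ftilde_iff[OF a f] by blast
  ultimately show ?thesis using assms(3) by (metis (no_types, lifting) equals0I)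
qed

lemma inj_on_phi: "inj_on phi tpoints"
proof (rule inj_onI)
  fix a b assume a: "a \<in> tpoints" and b: "b \<in> tpoints" and eq: "phi a = phi b"
  show "a = b"
  proof
    fix i
    have "semb (a i) = semb (b i)" using eq unfolding phi_def by meson
    then show "a i = b i" using a b semb_eq_semb_iff unfolding tpoints_def by blast
  qed
qed

lemma tsupp_eq_empty_iff: "tsupp f = {} \<longleftrightarrow> f = tpoly_zero"
  unfolding tsupp_def tpoly_zero_def by auto

theorem proposition4p18:
  fixes I :: "('n::finite) tpoly set"
  assumes "tideal I"
  shows "bij_betw phi (tropV I) ((\<Inter>f\<in>I - {tpoly_zero}. HV f) \<inter> phi ` tpoints)"
proof -
  have "a \<in> trop_hyp f \<longleftrightarrow> phi a \<in> HV f" if "a \<in> tpoints" "f \<in> I - {tpoly_zero}" for a f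
    using assms that tsupp_eq_empty_iff[of f] unfolding tideal_def
    by (intro trop_hyp_iff_phi_in_HV) auto
  then have "tropV I = {a \<in> tpoints. phi a \<in> (\<Inter>f\<in>I - {tpoly_zero}. HV f)}"
    unfolding tropV_def by blast
  then show ?thesis
    using inj_on_phi unfolding bij_betw_def by (auto intro: inj_on_subset)
qed

end
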